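(* There exists a countable two-dimensional subshift of finite type $X$ that has infinitely many periodic points and whose subpattern poset $(X/\!\approx, \succcurlyeq)$ contains an infinite antichain.
   Context: A two-dimensional SFT is the set of configurations in $S^{\mathbb{Z}^2}$ ($S$ finite) avoiding a finite set of forbidden finite patterns. For configurations $x,y$, $x \succcurlyeq y$ means every finite pattern occurring in $y$ also occurs in $x$; $x \approx y$ means $x \succcurlyeq y$ and $y \succcurlyeq x$. The subpattern poset of $X$ is $(X/\!\approx, \succcurlyeq)$. An antichain is a set of pairwise incomparable elements. *)

theory Defs
  imports Main "HOL-Library.Countable_Set"
begin

type_synonym 'a config = "int \<times> int \<Rightarrow> 'a"
type_synonym 'a pattern = "int \<times> int \<Rightarrow> 'a option"

definition vadd :: "int \<times> int \<Rightarrow> int \<times> int \<Rightarrow> int \<times> int" where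
  "vadd u v = (fst u + fst v, snd u + snd v)"

definition shift :: "int \<times> int \<Rightarrow> 'a config \<Rightarrow> 'a config" where
  "shift v x = (\<lambda>u. x (vadd u v))"

definition is_pattern :: "'a pattern \<Rightarrow> bool" where
  "is_pattern p \<longleftrightarrow> finite (dom p)"

definition occurs :: "'a pattern \<Rightarrow> 'a config \<Rightarrow> bool" where
  "occurs p x \<longleftrightarrow> (\<exists>v. \<forall>u\<in>dom p. p u = Some (x (vadd u v)))"

definition is_SFT :: "'a set \<Rightarrow> 'a config set \<Rightarrow> bool" where
  "is_SFT S X \<longleftrightarrow> finite S \<and> (\<exists>F. finite F \<and> (\<forall>p\<in>F. is_pattern p) \<and>
      X = {x. (\<forall>u. x u \<in> S) \<and> (\<forall>p\<in>F. \<not> occurs p x)})"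

definition subpat_ge :: "'a config \<Rightarrow> 'a config \<Rightarrow> bool" (infix "\<succcurlyeq>" 50) where
  "x \<succcurlyeq> y \<longleftrightarrow> (\<forall>p. is_pattern p \<longrightarrow> occurs p y \<longrightarrow> occurs p x)"

definition subpat_equiv :: "'a config \<Rightarrow> 'a config \<Rightarrow> bool" where
  "subpat_equiv x y \<longleftrightarrow> x \<succcurlyeq> y \<and> y \<succcurlyeq> x"

definition periodic :: "'a config \<Rightarrow> bool" where
  "periodic x \<longleftrightarrow> finite (range (\<lambda>v. shift v x))"

definition subpat_classes :: "'a config set \<Rightarrow> 'a config set set" where
  "subpat_classes X = (\<lambda>x. {y\<in>X. subpat_equiv x y}) ` X"

definition class_ge :: "'a config set \<Rightarrow> 'a config set \<Rightarrow> bool" where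
  "class_ge C D \<longleftrightarrow> (\<forall>x\<in>C. \<forall>y\<in>D. x \<succcurlyeq> y)"

definition antichain_in :: "'a config set \<Rightarrow> 'a config set set \<Rightarrow> bool" where
  "antichain_in X A \<longleftrightarrow> A \<subseteq> subpat_classes X \<and>
     (\<forall>C\<in>A. \<forall>D\<in>A. C \<noteq> D \<longrightarrow> \<not> class_ge C D \<and> \<not> class_ge D C)"

end

theory Submission
  imports Defs
begin

(*
  We construct an explicit two-dimensional SFT Lines over the alphabet {0,...,5}.  A
  configuration of Lines is a superposition of complete vertical lines (symbol 5),
  horizontal lines (4) and diagonal lines (3); lines may only cross at points where all
  three families meet (symbol 2).  The blank symbols 0 and 1 record, along every row,
  whether the last line to the left was vertical or diagonal, so that vertical and
  diagonal lines alternate along rows, and horizontal and diagonal lines along columns.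

  Countability: the columns, rows and diagonals carrying lines are each finite or
  periodic sets of integers (alternation and triple crossings force the vertical and the
  horizontal line sets to be translates of each other), there are only countably many
  such sets, and the three line sets together with the symbol at the origin determine
  a configuration.

  Periodic points and antichain: for every n >= 2 the n-periodic grid with lines
  through all multiples of n lies in Lines, and grids with different n are incomparable:
  the horizontal segment between two consecutive crossings of one grid does not occur in
  the other.
*)

lemma int_step_invariant:
  fixes f :: "int \<Rightarrow> bool"
  assumes "\<And>k. f k \<longleftrightarrow> f (k + 1)"
  shows "f k \<longleftrightarrow> f 0"
proof (induct k rule: int_induct[where k=0])
  case base then show ?case by simp
next
  case (step1 i) then show ?case using assms[of i] by simp
next
  case (step2 i) then show ?case using assms[of "i - 1"] by simp
qed

(* A sequence that, started in T, can only move into U \<subseteq> T or hit the marker c, must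
   hit c before leaving U.  This is how the local rules force lines to alternate. *)
lemma marker_between:
  fixes f :: "int \<Rightarrow> 'a"
  assumes step: "\<And>k. f k \<in> T \<Longrightarrow> f (k + 1) \<in> U \<union> {c}"
    and "U \<subseteq> T" and "f p \<in> T" and "p < q" and "f q \<notin> U \<union> {c}"
  shows "\<exists>d. p < d \<and> d < q \<and> f d = c"
proof (rule ccontr)
  assume "\<not> ?thesis"
  then have no_c: "f r \<noteq> c" if "p < r" "r \<le> q" for r
    using that assms(5) by (cases "r = q") auto
  have "f r \<in> U" if "p + 1 \<le> r" "r \<le> q" for r
    using that
  proof (induct r rule: int_ge_induct)
    case base
    then show ?case using step[OF assms(3)] no_c[of "p + 1"] by simp
  next
    case (step r)
    then show ?case using assms(1,2) no_c[of "r + 1"] by auto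
  qed
  then show False using assms(4,5) by auto
qed

definition vline :: "nat \<Rightarrow> bool" where "vline s \<longleftrightarrow> s = 2 \<or> s = 5"
definition hline :: "nat \<Rightarrow> bool" where "hline s \<longleftrightarrow> s = 2 \<or> s = 4"
definition dline :: "nat \<Rightarrow> bool" where "dline s \<longleftrightarrow> s = 2 \<or> s = 3"

definition right_ok :: "nat \<Rightarrow> nat \<Rightarrow> bool" where
  "right_ok s t \<longleftrightarrow> (hline s \<longleftrightarrow> hline t) \<and> (s = 5 \<longrightarrow> t \<in> {0,3}) \<and> (s = 0 \<longrightarrow> t \<in> {0,3})
     \<and> (s = 1 \<longrightarrow> t \<in> {1,5}) \<and> (s = 3 \<longrightarrow> t \<in> {1,5}) \<and> (t = 0 \<longrightarrow> s \<in> {0,5}) \<and> (t = 1 \<longrightarrow> s \<in> {1,3})"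

definition up_ok :: "nat \<Rightarrow> nat \<Rightarrow> bool" where
  "up_ok s t \<longleftrightarrow> (vline s \<longleftrightarrow> vline t) \<and> (s = 4 \<longrightarrow> t \<in> {1,3}) \<and> (s = 1 \<longrightarrow> t \<in> {1,3})
     \<and> (s = 0 \<longrightarrow> t \<in> {0,4}) \<and> (t = 0 \<longrightarrow> s \<in> {0,3}) \<and> (t = 1 \<longrightarrow> s \<in> {1,4})"

definition diag_ok :: "nat \<Rightarrow> nat \<Rightarrow> bool" where
  "diag_ok s t \<longleftrightarrow> (dline s \<longleftrightarrow> dline t)"

definition tiles :: "nat set" where "tiles = {0,1,2,3,4,5}"

definition domino :: "int \<times> int \<Rightarrow> nat \<Rightarrow> nat \<Rightarrow> nat pattern" where
  "domino d s t = [(0,0) \<mapsto> s, d \<mapsto> t]"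

definition bad_dominoes :: "int \<times> int \<Rightarrow> (nat \<Rightarrow> nat \<Rightarrow> bool) \<Rightarrow> nat pattern set" where
  "bad_dominoes d ok = {domino d s t |s t. s \<in> tiles \<and> t \<in> tiles \<and> \<not> ok s t}"

definition forbidden :: "nat pattern set" where
  "forbidden = bad_dominoes (1,0) right_ok \<union> bad_dominoes (0,1) up_ok \<union> bad_dominoes (1,1) diag_ok"

definition Lines :: "nat config set" where
  "Lines = {x. (\<forall>u. x u \<in> tiles) \<and> (\<forall>p\<in>forbidden. \<not> occurs p x)}"

lemma occurs_domino:
  assumes "d \<noteq> (0,0)"
  shows "occurs (domino d s t) x \<longleftrightarrow> (\<exists>v. x v = s \<and> x (vadd d v) = t)"
proof -
  have "dom (domino d s t) = {(0,0), d}" by (auto simp: domino_def)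
  then show ?thesis using assms unfolding occurs_def by (auto simp: domino_def vadd_def)
qed

lemma finite_bad_dominoes: "finite (bad_dominoes d ok)"
proof -
  have "bad_dominoes d ok \<subseteq> (\<lambda>(s, t). domino d s t) ` (tiles \<times> tiles)"
    unfolding bad_dominoes_def by auto
  then show ?thesis by (rule finite_subset) (simp add: tiles_def)
qed

lemma Lines_is_SFT: "is_SFT tiles Lines"
proof -
  have "is_pattern p" if "p \<in> forbidden" for p
    using that by (auto simp: forbidden_def bad_dominoes_def is_pattern_def domino_def)
  then show ?thesis
    unfolding is_SFT_def Lines_def
    by (intro conjI exI[of _ forbidden]) (auto simp: tiles_def forbidden_def finite_bad_dominoes)
qed

lemma avoids_bad_dominoes:
  assumes "\<And>u. x u \<in> tiles" and "d \<noteq> (0,0)"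
  shows "(\<forall>p\<in>bad_dominoes d ok. \<not> occurs p x) \<longleftrightarrow> (\<forall>v. ok (x v) (x (vadd d v)))"
proof
  assume avoid: "\<forall>p\<in>bad_dominoes d ok. \<not> occurs p x"
  show "\<forall>v. ok (x v) (x (vadd d v))"
  proof (rule allI, rule ccontr)
    fix v assume "\<not> ok (x v) (x (vadd d v))"
    then have "domino d (x v) (x (vadd d v)) \<in> bad_dominoes d ok"
      using assms(1) unfolding bad_dominoes_def by blast
    moreover have "occurs (domino d (x v) (x (vadd d v))) x"
      using occurs_domino[OF assms(2)] by blast
    ultimately show False using avoid by blast
  qed
next
  assume "\<forall>v. ok (x v) (x (vadd d v))"
  then show "\<forall>p\<in>bad_dominoes d ok. \<not> occurs p x"
    unfolding bad_dominoes_def by (auto simp: occurs_domino[OF assms(2)])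
qed

locale line_config =
  fixes x :: "nat config"
  assumes alph: "\<And>u. x u \<in> tiles"
    and right: "\<And>i j. right_ok (x (i,j)) (x (i+1,j))"
    and up: "\<And>i j. up_ok (x (i,j)) (x (i,j+1))"
    and diag: "\<And>i j. diag_ok (x (i,j)) (x (i+1,j+1))"

lemma Lines_iff: "x \<in> Lines \<longleftrightarrow> line_config x"
proof (cases "\<forall>u. x u \<in> tiles")
  case True
  then have "(\<forall>p\<in>forbidden. \<not> occurs p x) \<longleftrightarrow>
      (\<forall>v. right_ok (x v) (x (vadd (1,0) v))) \<and> (\<forall>v. up_ok (x v) (x (vadd (0,1) v)))
      \<and> (\<forall>v. diag_ok (x v) (x (vadd (1,1) v)))"
    unfolding forbidden_def ball_Un
    using avoids_bad_dominoes[OF True[rule_format], of "(1,0)"]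
      avoids_bad_dominoes[OF True[rule_format], of "(0,1)"]
      avoids_bad_dominoes[OF True[rule_format], of "(1,1)"] by simp
  then show ?thesis using True unfolding Lines_def line_config_def by (simp add: vadd_def add.commute)
qed (auto simp: Lines_def line_config_def)

lemma crossing_iff:
  "s = 2 \<longleftrightarrow> vline s \<and> hline s" "s = 2 \<longleftrightarrow> vline s \<and> dline s" "s = 2 \<longleftrightarrow> hline s \<and> dline s"
  by (auto simp: vline_def hline_def dline_def)

context line_config
begin

(* The columns, rows and diagonals (indexed by i - j) carrying lines. *)
definition vcols :: "int set" where "vcols = {i. vline (x (i,0))}"
definition hrows :: "int set" where "hrows = {j. hline (x (0,j))}"
definition diags :: "int set" where "diags = {k. dline (x (k,0))}"

(* Lines are complete: the local rules propagate them through the whole plane. *)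
lemma vline_iff: "vline (x (i,j)) \<longleftrightarrow> i \<in> vcols"
proof -
  have "vline (x (i,j)) \<longleftrightarrow> vline (x (i,0))"
    by (rule int_step_invariant[where f="\<lambda>j. vline (x (i,j))"]) (use up in \<open>simp add: up_ok_def\<close>)
  then show ?thesis by (simp add: vcols_def)
qed

lemma hline_iff: "hline (x (i,j)) \<longleftrightarrow> j \<in> hrows"
proof -
  have "hline (x (i,j)) \<longleftrightarrow> hline (x (0,j))"
    by (rule int_step_invariant[where f="\<lambda>i. hline (x (i,j))"]) (use right in \<open>simp add: right_ok_def\<close>)
  then show ?thesis by (simp add: hrows_def)
qed

lemma dline_iff: "dline (x (i,j)) \<longleftrightarrow> i - j \<in> diags"
proof -
  have "dline (x (i - j + j, j)) \<longleftrightarrow> dline (x (i - j + 0, 0))"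
  proof (rule int_step_invariant[where f="\<lambda>t. dline (x (i - j + t, t))"])
    fix k show "dline (x (i - j + k, k)) \<longleftrightarrow> dline (x (i - j + (k + 1), k + 1))"
      using diag[of "i - j + k" k] by (simp add: diag_ok_def algebra_simps)
  qed
  then show ?thesis by (simp add: diags_def)
qed

lemma diag_between_vlines:
  assumes "x (p1,j) = 5" "x (p2,j) = 5" "p1 < p2"
  shows "\<exists>d. p1 < d \<and> d < p2 \<and> x (d,j) = 3"
proof (rule marker_between[where f="\<lambda>i. x (i,j)" and T="{0,5}" and U="{0}"])
  fix k show "x (k, j) \<in> {0,5} \<Longrightarrow> x (k + 1, j) \<in> {0} \<union> {3}"
    using right[of k j] by (auto simp: right_ok_def)
qed (use assms in auto)

lemma vline_between_diags:
  assumes "x (p1,j) = 3" "x (p2,j) = 3" "p1 < p2"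
  shows "\<exists>d. p1 < d \<and> d < p2 \<and> x (d,j) = 5"
proof (rule marker_between[where f="\<lambda>i. x (i,j)" and T="{1,3}" and U="{1}"])
  fix k show "x (k, j) \<in> {1,3} \<Longrightarrow> x (k + 1, j) \<in> {1} \<union> {5}"
    using right[of k j] by (auto simp: right_ok_def)
qed (use assms in auto)

lemma diag_between_hlines:
  assumes "x (i,q1) = 4" "x (i,q2) = 4" "q1 < q2"
  shows "\<exists>d. q1 < d \<and> d < q2 \<and> x (i,d) = 3"
proof (rule marker_between[where f="\<lambda>j. x (i,j)" and T="{1,4}" and U="{1}"])
  fix k show "x (i, k) \<in> {1,4} \<Longrightarrow> x (i, k + 1) \<in> {1} \<union> {3}"
    using up[of i k] by (auto simp: up_ok_def)
qed (use assms in auto)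

(* Through a crossing (p,q) passes a diagonal, hence the vertical and horizontal lines
   are translates of each other: column p + t carries a line iff row q + t does. *)
lemma vcols_hrows_translate:
  assumes "p \<in> vcols" "q \<in> hrows"
  shows "p + t \<in> vcols \<longleftrightarrow> q + t \<in> hrows"
proof -
  have "x (p,q) = 2" using assms vline_iff hline_iff crossing_iff(1) by blast
  then have "p - q \<in> diags" using dline_iff crossing_iff(2) by blast
  then have "dline (x (p + t, q + t))" using dline_iff by simp
  then show ?thesis using vline_iff hline_iff crossing_iff(2,3) by blast
qed

(* Two vertical lines force a horizontal one: the diagonal between them on row 0
   crosses the right vertical line at a triple crossing. *)
lemma hrows_nonempty:
  assumes "p1 \<in> vcols" "p2 \<in> vcols" "p1 < p2"
  shows "hrows \<noteq> {}"
proof (cases "0 \<in> hrows")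
  case False
  then have "x (p1,0) = 5" "x (p2,0) = 5"
    using assms vline_iff hline_iff by (auto simp: vline_def hline_def)
  then obtain d where "x (d,0) = 3" using diag_between_vlines assms(3) by blast
  then have "d \<in> diags" using dline_iff[of d 0] by (simp add: dline_def)
  then have "dline (x (p2, p2 - d))" using dline_iff by simp
  then have "p2 - d \<in> hrows" using assms(2) vline_iff hline_iff crossing_iff(1,2) by blast
  then show ?thesis by blast
qed blast

lemma vcols_nonempty:
  assumes "q1 \<in> hrows" "q2 \<in> hrows" "q1 < q2"
  shows "vcols \<noteq> {}"
proof (cases "0 \<in> vcols")
  case False
  then have "x (0,q1) = 4" "x (0,q2) = 4"
    using assms vline_iff hline_iff by (auto simp: vline_def hline_def)
  then obtain d where "x (0,d) = 3" using diag_between_hlines assms(3) by blast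
  then have "- d \<in> diags" using dline_iff[of 0 d] by (simp add: dline_def)
  then have "dline (x (q2 - d, q2))" using dline_iff by simp
  then have "q2 - d \<in> vcols" using assms(2) vline_iff hline_iff crossing_iff(1,3) by blast
  then show ?thesis by blast
qed blast

end

definition finite_or_periodic :: "int set \<Rightarrow> bool" where
  "finite_or_periodic A \<longleftrightarrow> finite A \<or> (\<exists>n>0. \<forall>i. i \<in> A \<longleftrightarrow> i + n \<in> A)"

lemma periodic_mod_iff:
  fixes A :: "int set"
  assumes "n > 0" and per: "\<forall>i. i \<in> A \<longleftrightarrow> i + n \<in> A"
  shows "i \<in> A \<longleftrightarrow> i mod n \<in> A"
proof -
  have "i mod n + k * n \<in> A \<longleftrightarrow> i mod n + 0 * n \<in> A" for k
  proof (rule int_step_invariant[where f="\<lambda>k. i mod n + k * n \<in> A"])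
    fix k show "i mod n + k * n \<in> A \<longleftrightarrow> i mod n + (k + 1) * n \<in> A"
      using per[rule_format, of "i mod n + k * n"] by (simp add: algebra_simps)
  qed
  from this[of "i div n"] show ?thesis by (simp add: mod_div_mult_eq)
qed

(* There are countably many finite-or-periodic sets: an n-periodic set is determined by
   its finite trace on {0..<n}. *)
lemma countable_finite_or_periodic: "countable {A. finite_or_periodic A}"
proof -
  have "countable {A::int set. \<forall>i. i \<in> A \<longleftrightarrow> i + n \<in> A}" if n: "n > 0" for n :: int
  proof (rule countable_image_inj_on[where f="\<lambda>A. A \<inter> {0..<n}"])
    show "countable ((\<lambda>A. A \<inter> {0..<n}) ` {A. \<forall>i. i \<in> A \<longleftrightarrow> i + n \<in> A})"
      by (rule countable_subset[OF _ countable_Collect_finite]) auto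
    show "inj_on (\<lambda>A. A \<inter> {0..<n}) {A. \<forall>i. i \<in> A \<longleftrightarrow> i + n \<in> A}"
    proof (rule inj_onI, rule set_eqI)
      fix A B i
      assume "A \<in> {A. \<forall>i. i \<in> A \<longleftrightarrow> i + n \<in> A}" "B \<in> {A. \<forall>i. i \<in> A \<longleftrightarrow> i + n \<in> A}"
        and trace: "A \<inter> {0..<n} = B \<inter> {0..<n}"
      then have "i \<in> A \<longleftrightarrow> i mod n \<in> A" "i \<in> B \<longleftrightarrow> i mod n \<in> B"
        using periodic_mod_iff[OF n] by blast+
      moreover have "i mod n \<in> {0..<n}" using n by simp
      ultimately show "i \<in> A \<longleftrightarrow> i \<in> B" using trace by blast
    qed
  qed
  moreover have "{A. finite_or_periodic A} =
      {A. finite A} \<union> (\<Union>n\<in>{n::int. n > 0}. {A. \<forall>i. i \<in> A \<longleftrightarrow> i + n \<in> A})"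
    unfolding finite_or_periodic_def by auto
  ultimately show ?thesis by (auto intro: countable_Collect_finite)
qed

(* If A is coupled to a nonempty B so that all translates agree, any two elements of A
   give a period of A. *)
lemma periodic_if_coupled:
  fixes A B :: "int set"
  assumes coupled: "\<And>p q t. p \<in> A \<Longrightarrow> q \<in> B \<Longrightarrow> p + t \<in> A \<longleftrightarrow> q + t \<in> B"
    and "q \<in> B" "p1 \<in> A" "p2 \<in> A" "p1 < p2"
  shows "finite_or_periodic A"
proof -
  have "i \<in> A \<longleftrightarrow> i + (p2 - p1) \<in> A" for i
  proof -
    have "i \<in> A \<longleftrightarrow> q + (i - p1) \<in> B" using coupled[of p1 q "i - p1"] assms(2,3) by simp
    also have "\<dots> \<longleftrightarrow> p2 + (i - p1) \<in> A" using coupled[of p2 q "i - p1"] assms(2,4) by simp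
    finally show ?thesis by (simp add: algebra_simps)
  qed
  then show ?thesis using assms(5) unfolding finite_or_periodic_def
    by (intro disjI2 exI[of _ "p2 - p1"]) auto
qed

lemma infinite_two_elems:
  fixes A :: "int set"
  assumes "infinite A"
  obtains a b where "a \<in> A" "b \<in> A" "a < b"
proof -
  obtain a where "a \<in> A" using assms by fastforce
  moreover have "infinite (A - {a})" using assms by simp
  then obtain b where "b \<in> A - {a}" by (metis finite.emptyI ex_in_conv)
  ultimately show ?thesis using that by (cases "a < b") (auto simp: neq_iff)
qed

lemma finite_or_periodic_reflect:
  assumes "finite_or_periodic B"
  shows "finite_or_periodic {k. p - k \<in> B}"
proof -
  have image: "{k. p - k \<in> B} = (\<lambda>q. p - q) ` B" by force
  show ?thesis using assms unfolding finite_or_periodic_def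
  proof (elim disjE exE conjE)
    fix n :: int assume "n > 0" and per: "\<forall>i. i \<in> B \<longleftrightarrow> i + n \<in> B"
    have "p - k \<in> B \<longleftrightarrow> p - (k + n) \<in> B" for k
      using per[rule_format, of "p - (k + n)"] by simp
    then show "finite {k. p - k \<in> B} \<or> (\<exists>n>0. \<forall>i. i \<in> {k. p - k \<in> B} \<longleftrightarrow> i + n \<in> {k. p - k \<in> B})"
      using \<open>n > 0\<close> by auto
  qed (simp add: image)
qed

context line_config
begin

(* Infinitely many vertical lines come with a horizontal one, so the coupling of
   vcols_hrows_translate makes them periodic; symmetrically for horizontal lines. *)
lemma vcols_finite_or_periodic: "finite_or_periodic vcols"
proof (cases "finite vcols")
  case False
  then obtain p1 p2 where p: "p1 \<in> vcols" "p2 \<in> vcols" "p1 < p2" by (rule infinite_two_elems)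
  moreover obtain q where "q \<in> hrows" using hrows_nonempty p by blast
  ultimately show ?thesis using periodic_if_coupled[OF vcols_hrows_translate] by blast
qed (simp add: finite_or_periodic_def)

lemma hrows_finite_or_periodic: "finite_or_periodic hrows"
proof (cases "finite hrows")
  case False
  then obtain q1 q2 where q: "q1 \<in> hrows" "q2 \<in> hrows" "q1 < q2" by (rule infinite_two_elems)
  moreover obtain p where "p \<in> vcols" using vcols_nonempty q by blast
  ultimately show ?thesis using periodic_if_coupled[OF vcols_hrows_translate[symmetric]] by blast
qed (simp add: finite_or_periodic_def)

(* A vertical line at column p meets diagonal k exactly where a horizontal line is,
   so the diagonals are the reflection of the horizontal lines. *)
lemma diags_reflect_hrows:
  assumes "p \<in> vcols"
  shows "diags = {k. p - k \<in> hrows}"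
proof -
  have "k \<in> diags \<longleftrightarrow> p - k \<in> hrows" for k
    using dline_iff[of p "p - k"] hline_iff[of p "p - k"] vline_iff[of p "p - k"] assms
      crossing_iff(1,2) by auto
  then show ?thesis by blast
qed

(* Without vertical lines there is at most one diagonal, since between two
   diagonals on row 0 a vertical line would be needed. *)
lemma diags_subsingleton:
  assumes "vcols = {}" "k1 \<in> diags" "k2 \<in> diags"
  shows "k1 = k2"
proof (rule ccontr)
  have no_v: "\<not> vline (x (i,j))" for i j using assms(1) vline_iff by blast
  have diag_3: "x (k,0) = 3" if "k \<in> diags" for k
    using that dline_iff[of k 0] no_v[of k 0] by (auto simp: vline_def dline_def)
  assume "k1 \<noteq> k2"
  then consider "k1 < k2" | "k2 < k1" by linarith
  then obtain d where "x (d,0) = 5"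
    using vline_between_diags diag_3 assms(2,3) by cases blast+
  then show False using no_v[of d 0] by (simp add: vline_def)
qed

(* The diagonals are a reflection of the horizontal lines, or at most one line. *)
lemma diags_finite_or_periodic: "finite_or_periodic diags"
proof (cases "vcols = {}")
  case False
  then obtain p where "p \<in> vcols" by blast
  then show ?thesis
    using diags_reflect_hrows finite_or_periodic_reflect hrows_finite_or_periodic by simp
next
  case True
  have "finite diags"
  proof (cases "diags = {}")
    case False
    then obtain k where "k \<in> diags" by blast
    then have "diags \<subseteq> {k}" using True diags_subsingleton by blast
    then show ?thesis by (rule finite_subset) simp
  qed simp
  then show ?thesis by (simp add: finite_or_periodic_def)
qed

end

definition same_lines :: "nat \<Rightarrow> nat \<Rightarrow> bool" where
  "same_lines s t \<longleftrightarrow> (vline s \<longleftrightarrow> vline t) \<and> (hline s \<longleftrightarrow> hline t) \<and> (dline s \<longleftrightarrow> dline t)"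

lemma same_lines_blanks:
  assumes "s \<in> tiles" "t \<in> tiles" "same_lines s t" "s \<noteq> t"
  shows "s = 0 \<and> t = 1 \<or> s = 1 \<and> t = 0"
proof -
  have "s \<in> {0,1,2,3,4,5}" "t \<in> {0,1,2,3,4,5}" using assms(1,2) by (simp_all add: tiles_def)
  then show ?thesis using assms(3,4) unfolding same_lines_def vline_def hline_def dline_def
    by (elim insertE emptyE) simp_all
qed

lemma same_lines_force_blanks:
  assumes "same_lines s t" "s \<in> {0,a}" "t \<in> {1,b}" "a \<in> {3,4,5}" "b \<in> {3,4,5}" "a \<noteq> b"
  shows "s = 0 \<and> t = 1"
  using assms(2-6) unfolding same_lines_def vline_def hline_def dline_def
  by (elim insertE emptyE) (use assms(1) in \<open>simp_all add: same_lines_def vline_def hline_def dline_def\<close>)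

lemma blank_disagreement_everywhere:
  assumes X: "line_config x" and Y: "line_config y"
    and same: "\<And>u. same_lines (x u) (y u)"
    and start: "x (i,j) = 0" "y (i,j) = 1"
  shows "x (a,b) = 0 \<and> y (a,b) = 1"
proof -
  let ?D = "\<lambda>i j. x (i,j) = 0 \<and> y (i,j) = 1"
  have horizontal: "?D i j \<longleftrightarrow> ?D (i + 1) j" for i j
  proof
    assume "?D i j"
    then have "x (i + 1, j) \<in> {0,3}" "y (i + 1, j) \<in> {1,5}"
      using line_config.right[OF X, of i j] line_config.right[OF Y, of i j]
      unfolding right_ok_def by simp_all
    then show "?D (i + 1) j" using same_lines_force_blanks[OF same[of "(i + 1, j)"], of 3 5] by simp
  next
    assume "?D (i + 1) j"
    then have "x (i, j) \<in> {0,5}" "y (i, j) \<in> {1,3}"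
      using line_config.right[OF X, of i j] line_config.right[OF Y, of i j]
      unfolding right_ok_def by simp_all
    then show "?D i j" using same_lines_force_blanks[OF same[of "(i, j)"], of 5 3] by simp
  qed
  have vertical: "?D i j \<longleftrightarrow> ?D i (j + 1)" for i j
  proof
    assume "?D i j"
    then have "x (i, j + 1) \<in> {0,4}" "y (i, j + 1) \<in> {1,3}"
      using line_config.up[OF X, of i j] line_config.up[OF Y, of i j]
      unfolding up_ok_def by simp_all
    then show "?D i (j + 1)" using same_lines_force_blanks[OF same[of "(i, j + 1)"], of 4 3] by simp
  next
    assume "?D i (j + 1)"
    then have "x (i, j) \<in> {0,3}" "y (i, j) \<in> {1,4}"
      using line_config.up[OF X, of i j] line_config.up[OF Y, of i j]
      unfolding up_ok_def by simp_all
    then show "?D i j" using same_lines_force_blanks[OF same[of "(i, j)"], of 3 4] by simp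
  qed
  have "?D a b \<longleftrightarrow> ?D 0 b" by (rule int_step_invariant[where f="\<lambda>a. ?D a b", OF horizontal])
  also have "\<dots> \<longleftrightarrow> ?D 0 j"
    using int_step_invariant[where f="\<lambda>b. ?D 0 b", OF vertical, of b]
      int_step_invariant[where f="\<lambda>b. ?D 0 b", OF vertical, of j] by simp
  also have "\<dots> \<longleftrightarrow> ?D i j" by (rule int_step_invariant[where f="\<lambda>a. ?D a j", OF horizontal, symmetric])
  finally show ?thesis using start by blast
qed

(* A configuration of Lines is determined by its line sets and its symbol at the origin. *)
definition line_data :: "nat config \<Rightarrow> int set \<times> int set \<times> int set \<times> nat" where
  "line_data x = (line_config.vcols x, line_config.hrows x, line_config.diags x, x (0,0))"

lemma line_data_inj: "inj_on line_data Lines"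
proof (rule inj_onI, rule ext)
  fix x y and u :: "int \<times> int" assume "x \<in> Lines" "y \<in> Lines" and data: "line_data x = line_data y"
  then have X: "line_config x" and Y: "line_config y" by (simp_all add: Lines_iff)
  obtain i j where u: "u = (i,j)" by (cases u)
  have same: "same_lines (x v) (y v)" for v
    using data line_config.vline_iff[OF X] line_config.vline_iff[OF Y]
      line_config.hline_iff[OF X] line_config.hline_iff[OF Y]
      line_config.dline_iff[OF X] line_config.dline_iff[OF Y]
    by (cases v) (simp add: line_data_def same_lines_def)
  have origin: "x (0,0) = y (0,0)" using data by (simp add: line_data_def)
  show "x u = y u"
  proof (rule ccontr)
    assume "x u \<noteq> y u"
    then have "x (i,j) = 0 \<and> y (i,j) = 1 \<or> y (i,j) = 0 \<and> x (i,j) = 1"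
      using same_lines_blanks[OF line_config.alph[OF X] line_config.alph[OF Y] same] u by blast
    then show False
      using blank_disagreement_everywhere[OF X Y same, of i j 0 0]
        blank_disagreement_everywhere[OF Y X, of i j 0 0] same origin
      by (auto simp: same_lines_def)
  qed
qed

lemma countable_Lines: "countable Lines"
proof (rule countable_image_inj_on[OF _ line_data_inj])
  have "line_data ` Lines \<subseteq> {A. finite_or_periodic A} \<times> {A. finite_or_periodic A}
      \<times> {A. finite_or_periodic A} \<times> UNIV"
    using line_config.vcols_finite_or_periodic line_config.hrows_finite_or_periodic
      line_config.diags_finite_or_periodic by (auto simp: line_data_def Lines_iff)
  then show "countable (line_data ` Lines)"
    by (rule countable_subset) (simp add: countable_finite_or_periodic)
qed

definition cell_symbol :: "int \<Rightarrow> int \<Rightarrow> nat" where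
  "cell_symbol a b = (if a = 0 \<and> b = 0 then 2 else if a = 0 then 5 else if b = 0 then 4
     else if a = b then 3 else if a < b then 0 else 1)"

definition grid :: "int \<Rightarrow> nat config" where
  "grid n = (\<lambda>(i,j). cell_symbol (i mod n) (j mod n))"

(* Inside one cell, and across its boundary where the index wraps from n - 1 to 0,
   neighbouring cell symbols obey the three local rules. *)
lemma cell_symbol_right:
  "0 \<le> a \<Longrightarrow> a < n \<Longrightarrow> 0 \<le> b \<Longrightarrow> b < n \<Longrightarrow>
   right_ok (cell_symbol a b) (cell_symbol (if a = n - 1 then 0 else a + 1) b)"
  by (cases "a = n - 1"; cases "b = 0"; cases "a = 0"; cases "b = a"; cases "a + 1 = b";
      simp add: cell_symbol_def right_ok_def hline_def)

lemma cell_symbol_up: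
  "0 \<le> a \<Longrightarrow> a < n \<Longrightarrow> 0 \<le> b \<Longrightarrow> b < n \<Longrightarrow>
   up_ok (cell_symbol a b) (cell_symbol a (if b = n - 1 then 0 else b + 1))"
  by (cases "b = n - 1"; cases "a = 0"; cases "b = 0"; cases "b = a"; cases "b + 1 = a";
      simp add: cell_symbol_def up_ok_def vline_def)

lemma cell_symbol_diag:
  "0 \<le> a \<Longrightarrow> a < n \<Longrightarrow> 0 \<le> b \<Longrightarrow> b < n \<Longrightarrow>
   diag_ok (cell_symbol a b) (cell_symbol (if a = n - 1 then 0 else a + 1) (if b = n - 1 then 0 else b + 1))"
  by (auto simp: cell_symbol_def diag_ok_def dline_def)

lemma mod_plus_one:
  fixes i n :: int
  assumes "n > 0"
  shows "(i + 1) mod n = (if i mod n = n - 1 then 0 else i mod n + 1)"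
proof -
  have "(i + 1) mod n = (i mod n + 1) mod n" by (simp add: mod_add_left_eq)
  moreover have "0 \<le> i mod n" "i mod n < n" using assms by simp_all
  ultimately show ?thesis by (cases "i mod n = n - 1") simp_all
qed

lemma grid_in_Lines:
  assumes "n > 0"
  shows "grid n \<in> Lines"
  unfolding Lines_iff
proof
  fix u show "grid n u \<in> tiles" by (cases u) (simp add: grid_def cell_symbol_def tiles_def)
next
  fix i j
  have bounds: "0 \<le> i mod n" "i mod n < n" "0 \<le> j mod n" "j mod n < n" using assms by simp_all
  show "right_ok (grid n (i,j)) (grid n (i+1,j))"
    using cell_symbol_right[OF bounds] by (simp add: grid_def mod_plus_one[OF assms])
  show "up_ok (grid n (i,j)) (grid n (i,j+1))"
    using cell_symbol_up[OF bounds] by (simp add: grid_def mod_plus_one[OF assms])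
  show "diag_ok (grid n (i,j)) (grid n (i+1,j+1))"
    using cell_symbol_diag[OF bounds] by (simp add: grid_def mod_plus_one[OF assms])
qed

lemma grid_crossing_iff: "grid n (i,j) = 2 \<longleftrightarrow> i mod n = 0 \<and> j mod n = 0"
  by (simp add: grid_def cell_symbol_def)

lemma grid_periodic:
  assumes "n > 0"
  shows "periodic (grid n)"
proof -
  have "shift v (grid n) = shift (fst v mod n, snd v mod n) (grid n)" for v
    by (rule ext) (auto simp: shift_def vadd_def grid_def mod_add_right_eq)
  moreover have "(fst v mod n, snd v mod n) \<in> {0..<n} \<times> {0..<n}" for v using assms by simp
  ultimately have "range (\<lambda>v. shift v (grid n)) \<subseteq> (\<lambda>v. shift v (grid n)) ` ({0..<n} \<times> {0..<n})"
    by blast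
  then show ?thesis unfolding periodic_def by (rule finite_subset) simp
qed

definition window :: "'a config \<Rightarrow> (int \<times> int) set \<Rightarrow> 'a pattern" where
  "window x D = (\<lambda>u. if u \<in> D then Some (x u) else None)"

lemma window_is_pattern: "finite D \<Longrightarrow> is_pattern (window x D)"
  by (simp add: is_pattern_def window_def dom_def)

lemma occurs_window: "occurs (window x D) y \<longleftrightarrow> (\<exists>v. \<forall>u\<in>D. x u = y (vadd u v))"
proof -
  have "dom (window x D) = D" by (auto simp: window_def dom_def)
  then show ?thesis by (simp add: occurs_def window_def)
qed

(* Grids of different periods are incomparable: the horizontal segment of grid m
   between two consecutive crossings (0,0) and (m,0) does not occur in grid n. *)
lemma grids_incomparable:
  assumes "n \<ge> 2" "m \<ge> 2" "n \<noteq> m"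
  shows "\<not> grid n \<succcurlyeq> grid m"
proof
  let ?D = "{0..m} \<times> {0}"
  assume "grid n \<succcurlyeq> grid m"
  moreover have "occurs (window (grid m) ?D) (grid m)"
    unfolding occurs_window by (rule exI[of _ "(0,0)"]) (simp add: vadd_def)
  ultimately have "occurs (window (grid m) ?D) (grid n)"
    using window_is_pattern[of ?D "grid m"] unfolding subpat_ge_def by simp
  then obtain v1 v2 where v: "\<forall>u\<in>?D. grid m u = grid n (vadd u (v1,v2))"
    unfolding occurs_window by (metis surj_pair)
  have crossings: "grid m (0,0) = 2" "grid m (m,0) = 2" by (simp_all add: grid_crossing_iff)
  have "grid n (v1, v2) = 2" using v[rule_format, of "(0,0)"] crossings assms by (simp add: vadd_def)
  then have v1: "v1 mod n = 0" and v2: "v2 mod n = 0" by (simp_all add: grid_crossing_iff)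
  have "grid n (m + v1, v2) = 2" using v[rule_format, of "(m,0)"] crossings assms by (simp add: vadd_def)
  then have "m mod n = 0" using v1 by (simp add: grid_crossing_iff mod_add_right_eq[symmetric])
  then have "n < m"
  proof (rule contrapos_pp)
    assume "\<not> n < m"
    then have "m mod n = m" using assms by simp
    then show "m mod n \<noteq> 0" using assms by simp
  qed
  then have "grid m (n, 0) = grid n (n + v1, v2)" using v assms by (simp add: vadd_def)
  moreover have "grid n (n + v1, v2) = 2" using v1 v2 by (simp add: grid_crossing_iff)
  moreover have "grid m (n, 0) \<noteq> 2" using \<open>n < m\<close> assms by (simp add: grid_crossing_iff)
  ultimately show False by simp
qed

lemma subpat_ge_refl: "x \<succcurlyeq> x"
  by (simp add: subpat_ge_def)

lemma infinite_antichain_of_incomparable: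
  assumes "infinite I" and family: "f ` I \<subseteq> X"
    and incomparable: "\<And>n m. n \<in> I \<Longrightarrow> m \<in> I \<Longrightarrow> n \<noteq> m \<Longrightarrow> \<not> f n \<succcurlyeq> f m"
  shows "\<exists>A. antichain_in X A \<and> infinite A"
proof -
  define cls where "cls z = {y \<in> X. subpat_equiv z y}" for z
  have member: "f n \<in> cls (f n)" if "n \<in> I" for n
    using that family by (auto simp: cls_def subpat_equiv_def subpat_ge_refl)
  have classes_incomparable: "\<not> class_ge (cls (f n)) (cls (f m))"
    if "n \<in> I" "m \<in> I" "n \<noteq> m" for n m
    using member[OF that(1)] member[OF that(2)] incomparable[OF that] by (auto simp: class_ge_def)
  have "inj_on (cls \<circ> f) I"
  proof (rule inj_onI, rule ccontr)
    fix n m assume "n \<in> I" "m \<in> I" "(cls \<circ> f) n = (cls \<circ> f) m" "n \<noteq> m"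
    then have "f m \<in> cls (f n)" using member[of m] by simp
    then show False using incomparable[of n m] \<open>n \<in> I\<close> \<open>m \<in> I\<close> \<open>n \<noteq> m\<close>
      by (simp add: cls_def subpat_equiv_def)
  qed
  then have "infinite ((cls \<circ> f) ` I)" using assms(1) finite_imageD by blast
  moreover have "antichain_in X ((cls \<circ> f) ` I)"
    unfolding antichain_in_def subpat_classes_def
    using family classes_incomparable by (auto simp: cls_def)
  ultimately show ?thesis by blast
qed

theorem mainTheorem9:
  shows "\<exists>(S :: nat set) (X :: nat config set).
           is_SFT S X \<and> countable X \<and> infinite {x\<in>X. periodic x} \<and>
           (\<exists>A. antichain_in X A \<and> infinite A)"
proof -
  let ?I = "{n::int. n \<ge> 2}"
  have infinite_I: "infinite ?I" using infinite_Ici[of "2::int"] by (simp add: atLeast_def)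
  have grids: "grid ` ?I \<subseteq> {x \<in> Lines. periodic x}" using grid_in_Lines grid_periodic by auto
  have "inj_on grid ?I"
    by (rule inj_onI) (metis grids_incomparable mem_Collect_eq subpat_ge_refl)
  then have "infinite {x \<in> Lines. periodic x}"
    using infinite_I grids finite_imageD finite_subset by metis
  moreover have "\<exists>A. antichain_in Lines A \<and> infinite A"
    using infinite_I grids grids_incomparable by (intro infinite_antichain_of_incomparable) auto
  ultimately show ?thesis using Lines_is_SFT countable_Lines by blast
qed

end
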